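(* Let $p\ge3$, $n\ge1$, and real $a,b,e$ with $e>-p/2-n/2-1$, $-p/2-1<a<n/2+e$ and $-1<b<\min(n/2+e-a-1,0)$. For $w>0$ define $$\phi(w)=w\,\frac{\int_0^1\lambda^{p/2+a+1}(1-\lambda)^b(1+w\lambda)^{-p/2-n/2-e-2}\,d\lambda}{\int_0^1\lambda^{p/2+a}(1-\lambda)^b(1+w\lambda)^{-p/2-n/2-e-2}\,d\lambda}.$$ Then for all $w>0$ $$w\frac{\phi'(w)}{\phi(w)}\ge\frac{(p/2+a+2)\,b}{b+1}.$$ *)

theory Defs
  imports "HOL-Analysis.Analysis"
begin

definition phi_fun :: "nat \<Rightarrow> nat \<Rightarrow> real \<Rightarrow> real \<Rightarrow> real \<Rightarrow> real \<Rightarrow> real" where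
  "phi_fun p n a b e w =
     w * (LINT l:{0..1}|lborel. l powr (real p / 2 + a + 1) * (1 - l) powr b
             * (1 + w * l) powr (- real p / 2 - real n / 2 - e - 2))
       / (LINT l:{0..1}|lborel. l powr (real p / 2 + a) * (1 - l) powr b
             * (1 + w * l) powr (- real p / 2 - real n / 2 - e - 2))"

end

theory Submission
  imports Defs
begin

text \<open>
  Write B_c(h) for the integral over [0,1] of l^c (1 - l)^b h(l), and put alpha = p/2 + a,
  gamma = p/2 + n/2 + e + 2 and h_w(l) = (1 + w l)^(-gamma). Then phi(w) = w Y / X with
  X = B_alpha(h_w) and Y = B_(alpha+1)(h_w), and differentiating under the integral sign gives
  w phi'(w) / phi(w) = 1 - gamma w N_(alpha+2) / Y + gamma w N_(alpha+1) / X, where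
  N_c = B_c((1 + w l)^(-gamma-1)). Integrating the derivative of l^(alpha+1) (1 - l)^(b+1) h_w(l)
  over [0,1] eliminates N_(alpha+1), and as Y <= X the claim reduces to
  gamma w N_(alpha+2) <= (alpha+2)/(b+1) Y.

  This is the case c = alpha + 1, h = h_w of B_(c+1)(-h') <= k B_c(h), k = (c+1)/(b+1), which holds for
  every convex h with h(1) >= 0 when b <= 0. Integrating by parts twice, the difference of the
  two sides is k V(1) h(1) plus the integral of Phi h'', where V and U are the incomplete beta
  integrals of l^c (1 - l)^b and l^(c+1) (1 - l)^b and Phi(t) = k t V(t) - (k+1) U(t). Finally
  Phi >= 0 on [0,1]: it vanishes at 0 and 1, Phi'(0) = 0, and Phi'' changes sign at most once,
  from positive to negative.
\<close>

section \<open>Beta-weighted integrals\<close>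

definition beta_integral :: "real \<Rightarrow> real \<Rightarrow> (real \<Rightarrow> real) \<Rightarrow> real" where
  "beta_integral c b h = integral {0..1} (\<lambda>l. l powr c * (1 - l) powr b * h l)"

lemma set_integrable_beta_weighted:
  fixes c b :: real and h :: "real \<Rightarrow> real"
  assumes "c > -1" "b > -1" "continuous_on {0..1} h"
  shows "set_integrable lborel {0..1} (\<lambda>l. l powr c * (1 - l) powr b * h l)"
proof -
  obtain B where B: "\<And>l. l \<in> {0..1} \<Longrightarrow> \<bar>h l\<bar> \<le> B"
    using compact_continuous_image[OF assms(3) compact_Icc]
    by (metis bounded_iff compact_imp_bounded image_eqI real_norm_def)
  have "set_integrable lborel {0..1} (\<lambda>l. B * (l powr c * (1 - l) powr b))"
    using integrable_Beta[of "c+1" "b+1"] assms by simp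
  then show ?thesis
  proof (rule set_integrable_bound)
    have "(\<lambda>l. l powr c * (1 - l) powr b) \<in> borel_measurable borel"
      by measurable
    moreover have "set_borel_measurable borel {0..1} h"
      by (rule set_measurable_continuous_on) (use assms in auto)
    ultimately have "(\<lambda>l. l powr c * (1 - l) powr b * (indicator {0..1} l * h l)) \<in> borel_measurable borel"
      unfolding set_borel_measurable_def real_scaleR_def by (rule borel_measurable_times)
    then show "set_borel_measurable lborel {0..1} (\<lambda>l. l powr c * (1 - l) powr b * h l)"
      by (simp add: set_borel_measurable_def ac_simps)
    show "AE l\<in>{0..1} in lborel. norm (l powr c * (1 - l) powr b * h l)
                                 \<le> norm (B * (l powr c * (1 - l) powr b))"
    proof (intro AE_I2 impI)
      fix l :: real assume "l \<in> {0..1}"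
      then have "l powr c * (1 - l) powr b * \<bar>h l\<bar> \<le> l powr c * (1 - l) powr b * \<bar>B\<bar>"
        using B by (intro mult_left_mono) force+
      then show "norm (l powr c * (1 - l) powr b * h l) \<le> norm (B * (l powr c * (1 - l) powr b))"
        by (simp add: abs_mult ac_simps)
    qed
  qed
qed

lemma integrable_beta_weighted:
  fixes h :: "real \<Rightarrow> real"
  assumes "c > -1" "b > -1" "continuous_on {0..1} h"
  shows "(\<lambda>l. l powr c * (1 - l) powr b * h l) integrable_on {0..1}"
  using set_integrable_beta_weighted[OF assms] by (rule set_borel_integral_eq_integral)

lemma integrable_beta_weight:
  fixes c b :: real
  assumes "c > -1" "b > -1"
  shows "(\<lambda>l. l powr c * (1 - l) powr b) integrable_on {0..1}"
  using integrable_beta_weighted[of c b "\<lambda>_. 1"] assms by simp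

lemma set_lebesgue_integral_eq_beta_integral:
  fixes h :: "real \<Rightarrow> real"
  assumes "c > -1" "b > -1" "continuous_on {0..1} h"
  shows "(LINT l:{0..1}|lborel. l powr c * (1 - l) powr b * h l) = beta_integral c b h"
  unfolding beta_integral_def
  using set_integrable_beta_weighted[OF assms] by (rule set_borel_integral_eq_integral)

lemma beta_integral_const_1:
  fixes c b :: real
  assumes "c > -1" "b > -1"
  shows "beta_integral c b (\<lambda>_. 1) = Beta (c + 1) (b + 1)"
  unfolding beta_integral_def using has_integral_Beta_real[of "c + 1" "b + 1"] assms
  by (simp add: integral_unique)

lemma beta_integral_plus1_left:
  "beta_integral (c + 1) b h = beta_integral c b (\<lambda>l. l * h l)"
  unfolding beta_integral_def by (intro integral_cong) (simp add: powr_add)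

lemma beta_integral_plus1_right:
  "beta_integral c (b + 1) h = beta_integral c b (\<lambda>l. (1 - l) * h l)"
  unfolding beta_integral_def by (intro integral_cong) (simp add: powr_add)

lemma beta_integral_cmult:
  "beta_integral c b (\<lambda>l. k * h l) = k * beta_integral c b h"
  unfolding beta_integral_def by (simp add: ac_simps)

lemma beta_integral_add:
  fixes f g :: "real \<Rightarrow> real"
  assumes "c > -1" "b > -1" "continuous_on {0..1} f" "continuous_on {0..1} g"
  shows "beta_integral c b (\<lambda>l. f l + g l) = beta_integral c b f + beta_integral c b g"
  unfolding beta_integral_def
  using integral_add[OF integrable_beta_weighted[OF assms(1,2,3)] integrable_beta_weighted[OF assms(1,2,4)]]
  by (simp add: distrib_left)

lemma beta_integral_diff:
  fixes f g :: "real \<Rightarrow> real"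
  assumes "c > -1" "b > -1" "continuous_on {0..1} f" "continuous_on {0..1} g"
  shows "beta_integral c b (\<lambda>l. f l - g l) = beta_integral c b f - beta_integral c b g"
  unfolding beta_integral_def
  using integral_diff[OF integrable_beta_weighted[OF assms(1,2,3)] integrable_beta_weighted[OF assms(1,2,4)]]
  by (simp add: right_diff_distrib)

lemma beta_integral_mono:
  fixes f g :: "real \<Rightarrow> real"
  assumes "c > -1" "b > -1" "continuous_on {0..1} f" "continuous_on {0..1} g"
    and "\<And>l. l \<in> {0..1} \<Longrightarrow> f l \<le> g l"
  shows "beta_integral c b f \<le> beta_integral c b g"
  unfolding beta_integral_def
  by (intro integral_le integrable_beta_weighted mult_left_mono) (use assms in auto)

lemma beta_integral_pos:
  fixes h :: "real \<Rightarrow> real"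
  assumes "c > -1" "b > -1" "continuous_on {0..1} h" "\<And>l. l \<in> {0..1} \<Longrightarrow> 0 < h l"
  shows "0 < beta_integral c b h"
proof -
  obtain m where m: "m \<in> {0..1}" "\<And>l. l \<in> {0..1} \<Longrightarrow> h m \<le> h l"
    using continuous_attains_inf[OF compact_Icc _ assms(3)] by auto
  have "beta_integral c b (\<lambda>_. h m) = h m * Beta (c + 1) (b + 1)"
    using beta_integral_cmult[of c b "h m" "\<lambda>_. 1"] beta_integral_const_1[OF assms(1,2)] by simp
  moreover have "0 < h m * Beta (c + 1) (b + 1)"
    using assms(1,2,4) m(1) by (simp add: Beta_def)
  moreover have "beta_integral c b (\<lambda>_. h m) \<le> beta_integral c b h"
    using assms m by (intro beta_integral_mono) auto
  ultimately show ?thesis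
    by linarith
qed

lemma beta_integral_by_parts:
  fixes h h' :: "real \<Rightarrow> real"
  assumes c: "c > -1" and b: "b > -1"
    and h: "continuous_on {0..1} h" and h': "continuous_on {0..1} h'"
    and deriv: "\<And>x. x \<in> {0<..<1} \<Longrightarrow> (h has_real_derivative h' x) (at x)"
  shows "(c + 1) * beta_integral c b h
         = (c + b + 2) * beta_integral (c + 1) b h - beta_integral (c + 1) (b + 1) h'"
proof -
  define F where "F l = l powr (c + 1) * (1 - l) powr (b + 1) * h l" for l :: real
  define k where "k l = (c + 1) * ((1 - l) * h l) - (b + 1) * (l * h l) + l * ((1 - l) * h' l)"
    for l :: real
  have "((\<lambda>l. l powr c * (1 - l) powr b * k l) has_integral (F 1 - F 0)) {0..1}"
  proof (rule fundamental_theorem_of_calculus_interior)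
    show "continuous_on {0..1} F"
      unfolding F_def using c b h by (intro continuous_intros continuous_on_powr') auto
    fix x :: real assume x: "x \<in> {0<..<1}"
    have "(F has_real_derivative
            (c + 1) * x powr c * (1 - x) powr (b + 1) * h x
            - x powr (c + 1) * ((b + 1) * (1 - x) powr b) * h x
            + x powr (c + 1) * (1 - x) powr (b + 1) * h' x) (at x)"
      unfolding F_def using x
      by (auto intro!: derivative_eq_intros deriv simp: algebra_simps)
    then show "(F has_vector_derivative x powr c * (1 - x) powr b * k x) (at x)"
      unfolding has_real_derivative_iff_has_vector_derivative[symmetric] k_def
      by (rule DERIV_cong) (use x in \<open>simp add: powr_add algebra_simps\<close>)
  qed simp
  moreover have "F 1 - F 0 = 0"
    unfolding F_def using c b by simp
  ultimately have "beta_integral c b k = 0"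
    unfolding beta_integral_def by (simp add: integral_unique)
  moreover have "beta_integral c b k
      = (c + 1) * (beta_integral c b h - beta_integral (c + 1) b h)
        - (b + 1) * beta_integral (c + 1) b h + beta_integral (c + 1) (b + 1) h'"
    unfolding k_def using c b h h'
    by (simp add: beta_integral_add beta_integral_diff beta_integral_cmult beta_integral_plus1_left
        beta_integral_plus1_right left_diff_distrib continuous_intros)
  ultimately show ?thesis
    by (simp add: algebra_simps)
qed

section \<open>Differentiation under the integral sign\<close>

lemma has_real_derivative_integral_quadratic_remainder:
  fixes f :: "real \<Rightarrow> 'a::euclidean_space \<Rightarrow> real" and f' g :: "'a \<Rightarrow> real"
  assumes U: "open U" "w \<in> U"
    and f: "\<And>y. y \<in> U \<Longrightarrow> f y integrable_on S"
    and f': "f' integrable_on S" and g: "g integrable_on S"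
    and remainder: "\<And>y l. y \<in> U \<Longrightarrow> l \<in> S \<Longrightarrow>
                      \<bar>f y l - f w l - (y - w) * f' l\<bar> \<le> (y - w)\<^sup>2 * g l"
  shows "((\<lambda>y. integral S (f y)) has_real_derivative integral S f') (at w)"
proof -
  define F where "F y = integral S (f y)" for y
  have F_remainder: "\<bar>F y - F w - (y - w) * integral S f'\<bar> \<le> (y - w)\<^sup>2 * integral S g"
    if y: "y \<in> U" for y
  proof -
    have R: "((\<lambda>l. f y l - f w l - (y - w) * f' l)
               has_integral (F y - F w - (y - w) * integral S f')) S"
      unfolding F_def
      by (intro has_integral_diff has_integral_mult_right integrable_integral f y U(2) f')
    have "norm (integral S (\<lambda>l. f y l - f w l - (y - w) * f' l))
          \<le> integral S (\<lambda>l. (y - w)\<^sup>2 * g l)"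
      using R remainder[OF y] integrable_cmul[OF g, of "(y - w)\<^sup>2"]
      by (intro integral_norm_bound_integral) auto
    then show ?thesis
      using integral_unique[OF R] by simp
  qed
  have "\<forall>\<^sub>F y in at w. norm ((F y - F w) / (y - w) - integral S f') \<le> integral S g * \<bar>y - w\<bar>"
    using eventually_at_in_open[OF U]
  proof eventually_elim
    case (elim y)
    then have "y \<noteq> w" by simp
    then have "norm ((F y - F w) / (y - w) - integral S f')
               = \<bar>F y - F w - (y - w) * integral S f'\<bar> / \<bar>y - w\<bar>"
      by (simp add: field_simps)
    also have "\<dots> \<le> (y - w)\<^sup>2 * integral S g / \<bar>y - w\<bar>"
      using elim by (intro divide_right_mono F_remainder) auto
    also have "\<dots> = integral S g * \<bar>y - w\<bar>"
      using \<open>y \<noteq> w\<close> by (simp add: power2_eq_square field_simps)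
    finally show ?case .
  qed
  moreover have "((\<lambda>y. integral S g * \<bar>y - w\<bar>) \<longlongrightarrow> 0) (at w)"
    by (intro tendsto_eq_intros) auto
  ultimately have "((\<lambda>y. (F y - F w) / (y - w)) \<longlongrightarrow> integral S f') (at w)"
    by (subst LIM_zero_iff[symmetric]) (rule Lim_null_comparison)
  then show ?thesis
    unfolding F_def has_field_derivative_iff .
qed

lemma one_plus_powr_taylor_remainder:
  fixes d l y w :: real
  assumes d: "d \<le> 2" and l: "0 \<le> l" and y: "0 \<le> y" and w: "0 \<le> w"
  shows "\<bar>(1 + y * l) powr d - (1 + w * l) powr d - (y - w) * (d * l * (1 + w * l) powr (d - 1))\<bar>
         \<le> (y - w)\<^sup>2 * (\<bar>d * (d - 1)\<bar> / 2 * l\<^sup>2)"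
proof (cases "y = w")
  case False
  define D where "D m t = (if m = 0 then (1 + t * l) powr d
      else if m = 1 then d * l * (1 + t * l) powr (d - 1)
      else d * (d - 1) * l\<^sup>2 * (1 + t * l) powr (d - 2))" for m :: nat and t :: real
  have pos: "0 < 1 + t * l" if "0 \<le> t" for t
    using that l by (simp add: add_pos_nonneg)
  have deriv: "(D m has_real_derivative D (Suc m) t) (at t)" if "m < 2" "0 \<le> t" for m t
  proof -
    have "m = 0 \<or> m = 1" using that(1) by auto
    then show ?thesis
      unfolding D_def using pos[OF that(2)]
      by (elim disjE) (auto intro!: derivative_eq_intros simp: power2_eq_square algebra_simps)
  qed
  obtain t where t_between: "if y < w then y < t \<and> t < w else w < t \<and> t < y"
    and taylor: "D 0 y = (\<Sum>m<2. D m w / fact m * (y - w) ^ m) + D 2 t / fact 2 * (y - w) ^ 2"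
    using Taylor[of 2 D "D 0" 0 "y + w" w y] deriv False y w by auto
  have t: "0 \<le> t"
    using t_between y w by (auto split: if_splits)
  have "(1 + t * l) powr (d - 2) \<le> 1"
    using powr_mono2'[of "d - 2" 1 "1 + t * l"] d t l by simp
  then have bound: "\<bar>D 2 t\<bar> / 2 \<le> \<bar>d * (d - 1)\<bar> / 2 * l\<^sup>2"
    unfolding D_def by (simp add: abs_mult mult_left_le)
  have eq: "(1 + y * l) powr d - (1 + w * l) powr d - (y - w) * (d * l * (1 + w * l) powr (d - 1))
            = (y - w)\<^sup>2 * (D 2 t / 2)"
    using taylor by (simp add: D_def eval_nat_numeral)
  show ?thesis
    using mult_left_mono[OF bound, of "(y - w)\<^sup>2"] unfolding eq by (simp add: abs_mult)
qed simp

lemma continuous_on_one_plus_powr: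
  fixes y d :: real
  assumes "0 \<le> y"
  shows "continuous_on {0..1} (\<lambda>l. (1 + y * l) powr d)"
proof -
  have "0 < 1 + y * l" if "l \<in> {0..1}" for l
    using assms that by (simp add: add_pos_nonneg)
  then show ?thesis
    by (intro continuous_intros) force+
qed

lemma has_real_derivative_beta_integral_one_plus_powr:
  fixes c b d w :: real
  assumes c: "c > -1" and b: "b > -1" and d: "d \<le> 2" and w: "w > 0"
  shows "((\<lambda>y. beta_integral c b (\<lambda>l. (1 + y * l) powr d)) has_real_derivative
           d * beta_integral (c + 1) b (\<lambda>l. (1 + w * l) powr (d - 1))) (at w)"
proof -
  let ?\<omega> = "\<lambda>l::real. l powr c * (1 - l) powr b"
  have "((\<lambda>y. integral {0..1} (\<lambda>l. ?\<omega> l * (1 + y * l) powr d)) has_real_derivative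
          integral {0..1} (\<lambda>l. ?\<omega> l * (d * l * (1 + w * l) powr (d - 1)))) (at w)"
  proof (rule has_real_derivative_integral_quadratic_remainder
      [where U = "{0<..}" and g = "\<lambda>l. ?\<omega> l * (\<bar>d * (d - 1)\<bar> / 2 * l\<^sup>2)"])
    fix y l :: real assume y: "y \<in> {0<..}" and l: "l \<in> {0..1}"
    let ?r = "(1 + y * l) powr d - (1 + w * l) powr d - (y - w) * (d * l * (1 + w * l) powr (d - 1))"
    have "\<bar>?\<omega> l * (1 + y * l) powr d - ?\<omega> l * (1 + w * l) powr d
            - (y - w) * (?\<omega> l * (d * l * (1 + w * l) powr (d - 1)))\<bar> = \<bar>?\<omega> l * ?r\<bar>"
      by (rule arg_cong[where f = abs]) (simp add: algebra_simps)
    also have "\<dots> = ?\<omega> l * \<bar>?r\<bar>"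
      by (simp add: abs_mult)
    also have "\<dots> \<le> ?\<omega> l * ((y - w)\<^sup>2 * (\<bar>d * (d - 1)\<bar> / 2 * l\<^sup>2))"
      using y l w by (intro mult_left_mono one_plus_powr_taylor_remainder d) auto
    finally show "\<bar>?\<omega> l * (1 + y * l) powr d - ?\<omega> l * (1 + w * l) powr d
                 - (y - w) * (?\<omega> l * (d * l * (1 + w * l) powr (d - 1)))\<bar>
               \<le> (y - w)\<^sup>2 * (?\<omega> l * (\<bar>d * (d - 1)\<bar> / 2 * l\<^sup>2))"
      by (simp only: mult.left_commute)
  qed (use c b w in \<open>auto intro!: integrable_beta_weighted continuous_on_one_plus_powr continuous_intros\<close>)
  moreover have "integral {0..1} (\<lambda>l. ?\<omega> l * (d * l * (1 + w * l) powr (d - 1)))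
                 = d * beta_integral (c + 1) b (\<lambda>l. (1 + w * l) powr (d - 1))"
    by (simp add: beta_integral_plus1_left flip: beta_integral_cmult) (simp add: beta_integral_def ac_simps)
  ultimately show ?thesis
    unfolding beta_integral_def by simp
qed

section \<open>Functions whose second derivative changes sign once\<close>

lemma MVT_open:
  fixes f f' :: "real \<Rightarrow> real"
  assumes "a < b" "continuous_on {a..b} f"
    and "\<And>x. x \<in> {a<..<b} \<Longrightarrow> (f has_real_derivative f' x) (at x)"
  shows "\<exists>z\<in>{a<..<b}. f b - f a = (b - a) * f' z"
proof -
  have "f differentiable (at x)" if "a < x" "x < b" for x
    using assms(3) that real_differentiable_def by auto
  then obtain l z where z: "a < z" "z < b" "(f has_real_derivative l) (at z)" "f b - f a = (b - a) * l"
    using MVT[OF assms(1,2)] by blast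
  moreover have "(f has_real_derivative f' z) (at z)"
    using assms(3) z(1,2) by auto
  ultimately have "l = f' z"
    using DERIV_unique by blast
  with z show ?thesis by auto
qed

lemma nonneg_if_second_derivative_changes_sign_once:
  fixes \<Phi> \<psi> D :: "real \<Rightarrow> real"
  assumes \<Phi>: "continuous_on {a..b} \<Phi>" "\<Phi> a = 0" "\<Phi> b = 0"
    and d\<Phi>: "\<And>x. x \<in> {a<..<b} \<Longrightarrow> (\<Phi> has_real_derivative \<psi> x) (at x)"
    and \<psi>: "continuous_on {a..<b} \<psi>" "\<psi> a = 0"
    and d\<psi>: "\<And>x. x \<in> {a<..<b} \<Longrightarrow> (\<psi> has_real_derivative D x) (at x)"
    and crossing: "\<And>x y. a < x \<Longrightarrow> x < y \<Longrightarrow> y < b \<Longrightarrow> D x < 0 \<Longrightarrow> D y \<le> 0"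
    and t: "t \<in> {a..b}"
  shows "0 \<le> \<Phi> t"
proof (rule ccontr)
  assume "\<not> 0 \<le> \<Phi> t"
  then have neg: "\<Phi> t < 0" by simp
  have t': "a < t" "t < b"
    using t neg \<Phi>(2,3) by (cases "t = a", auto, cases "t = b", auto)
  \<comment> \<open>By the mean value theorem \<psi> is negative before t and positive after t; since \<psi> a = 0,
    D is then negative somewhere and positive further to the right.\<close>
  obtain z1 where z1: "z1 \<in> {a<..<t}" "\<Phi> t - \<Phi> a = (t - a) * \<psi> z1"
    using MVT_open[of a t \<Phi> \<psi>, OF t'(1) continuous_on_subset[OF \<Phi>(1)]] t' d\<Phi> by auto
  obtain z2 where z2: "z2 \<in> {t<..<b}" "\<Phi> b - \<Phi> t = (b - t) * \<psi> z2"
    using MVT_open[of t b \<Phi> \<psi>, OF t'(2) continuous_on_subset[OF \<Phi>(1)]] t' d\<Phi> by auto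
  have "\<psi> z1 < 0"
    using z1 t' neg \<Phi>(2) by (auto simp: mult_less_0_iff)
  have "0 < (b - t) * \<psi> z2"
    using z2(2) neg \<Phi>(3) by simp
  then have "0 < \<psi> z2"
    using z2(1) by (simp add: zero_less_mult_iff)
  have "{a..z1} \<subseteq> {a..<b}" "{z1..z2} \<subseteq> {a..<b}"
    using z1 z2 t' by auto
  obtain \<eta> where \<eta>: "\<eta> \<in> {a<..<z1}" "\<psi> z1 - \<psi> a = (z1 - a) * D \<eta>"
    using MVT_open[of a z1 \<psi> D, OF _ continuous_on_subset[OF \<psi>(1) \<open>{a..z1} \<subseteq> {a..<b}\<close>]] z1 t' d\<psi> by auto
  obtain \<xi> where \<xi>: "\<xi> \<in> {z1<..<z2}" "\<psi> z2 - \<psi> z1 = (z2 - z1) * D \<xi>"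
    using MVT_open[of z1 z2 \<psi> D, OF _ continuous_on_subset[OF \<psi>(1) \<open>{z1..z2} \<subseteq> {a..<b}\<close>]] z1 z2 t' d\<psi> by auto
  have "D \<eta> < 0"
    using \<eta> \<open>\<psi> z1 < 0\<close> \<psi>(2) by (auto simp: mult_less_0_iff)
  have "0 < (z2 - z1) * D \<xi>"
    using \<xi>(2) \<open>\<psi> z1 < 0\<close> \<open>0 < \<psi> z2\<close> by simp
  then have "0 < D \<xi>"
    using \<xi>(1) by (simp add: zero_less_mult_iff)
  moreover have "a < \<eta>" "\<eta> < \<xi>" "\<xi> < b"
    using \<eta> \<xi> z1 z2 t' by auto
  ultimately show False
    using crossing[of \<eta> \<xi>] \<open>D \<eta> < 0\<close> by linarith
qed

lemma has_real_derivative_indefinite_integral: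
  fixes f :: "real \<Rightarrow> real"
  assumes f: "f integrable_on {a..b}" and x: "x \<in> {a<..<b}" and "isCont f x"
  shows "((\<lambda>u. integral {a..u} f) has_real_derivative f x) (at x)"
proof -
  have "((\<lambda>u. integral {a..u} f) has_vector_derivative f x) (at x within {a..b})"
    using integral_has_vector_derivative_continuous_at[OF f, of x "{}"] x assms(3)
    by (simp add: continuous_at_imp_continuous_at_within)
  moreover have "at x within {a..b} = at x"
    using x by (intro at_within_interior) auto
  ultimately show ?thesis
    by (simp add: has_real_derivative_iff_has_vector_derivative)
qed

section \<open>The moment inequality for convex functions\<close>

definition partial_beta_integral :: "real \<Rightarrow> real \<Rightarrow> real \<Rightarrow> real" where
  "partial_beta_integral c b u = integral {0..u} (\<lambda>l. l powr c * (1 - l) powr b)"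

lemma partial_beta_integral_0 [simp]: "partial_beta_integral c b 0 = 0"
  by (simp add: partial_beta_integral_def)

lemma partial_beta_integral_1:
  fixes c b :: real
  assumes "c > -1" "b > -1"
  shows "partial_beta_integral c b 1 = Beta (c + 1) (b + 1)"
  using beta_integral_const_1[OF assms] by (simp add: partial_beta_integral_def beta_integral_def)

lemma continuous_on_partial_beta_integral:
  fixes c b :: real
  assumes "c > -1" "b > -1"
  shows "continuous_on {0..1} (partial_beta_integral c b)"
  unfolding partial_beta_integral_def
  by (rule indefinite_integral_continuous_1[OF integrable_beta_weight[OF assms]])

lemma has_real_derivative_partial_beta_integral:
  fixes c b :: real
  assumes "c > -1" "b > -1" "x \<in> {0<..<1}"
  shows "(partial_beta_integral c b has_real_derivative x powr c * (1 - x) powr b) (at x)"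
  unfolding partial_beta_integral_def
  by (rule has_real_derivative_indefinite_integral[OF integrable_beta_weight[OF assms(1,2)] assms(3)])
    (use assms(3) in \<open>auto intro!: continuous_intros\<close>)

definition beta_moment_gap :: "real \<Rightarrow> real \<Rightarrow> real \<Rightarrow> real" where
  "beta_moment_gap c b t = (c + 1) / (b + 1) * t * partial_beta_integral c b t
                           - ((c + 1) / (b + 1) + 1) * partial_beta_integral (c + 1) b t"

lemma beta_moment_gap_0 [simp]: "beta_moment_gap c b 0 = 0"
  by (simp add: beta_moment_gap_def)

lemma beta_moment_gap_1:
  fixes c b :: real
  assumes "c > -1" "b > -1"
  shows "beta_moment_gap c b 1 = 0"
proof -
  have "(c + 1 + (b + 1)) * Beta (c + 1 + 1) (b + 1) = (c + 1) * Beta (c + 1) (b + 1)"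
    using assms by (intro Beta_plus1_left) (auto elim: nonpos_Ints_cases)
  then show ?thesis
    using assms by (simp add: beta_moment_gap_def partial_beta_integral_1 field_simps)
qed

lemma continuous_on_beta_moment_gap:
  fixes c b :: real
  assumes "c > -1" "b > -1"
  shows "continuous_on {0..1} (beta_moment_gap c b)"
  unfolding beta_moment_gap_def using assms
  by (intro continuous_intros continuous_on_partial_beta_integral) auto

lemma has_real_derivative_beta_moment_gap:
  fixes c b :: real
  assumes c: "c > -1" and b: "b > -1" and x: "x \<in> {0<..<1}"
  shows "(beta_moment_gap c b has_real_derivative
           (c + 1) / (b + 1) * partial_beta_integral c b x - x powr (c + 1) * (1 - x) powr b) (at x)"
proof -
  define k where "k = (c + 1) / (b + 1)"
  have "(partial_beta_integral c b has_real_derivative x powr c * (1 - x) powr b) (at x)"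
    "(partial_beta_integral (c + 1) b has_real_derivative x powr (c + 1) * (1 - x) powr b) (at x)"
    using c b x by (intro has_real_derivative_partial_beta_integral; simp)+
  then show ?thesis
    unfolding beta_moment_gap_def[abs_def] k_def[symmetric] using x
    by (auto intro!: derivative_eq_intros simp: powr_add algebra_simps)
qed

lemma beta_moment_gap_nonneg:
  fixes c b t :: real
  assumes c: "c > -1" and b: "-1 < b" "b \<le> 0" and t: "t \<in> {0..1}"
  shows "0 \<le> beta_moment_gap c b t"
proof -
  define k where "k = (c + 1) / (b + 1)"
  define \<psi> where "\<psi> u = k * partial_beta_integral c b u - u powr (c + 1) * (1 - u) powr b" for u
  define D where "D x = x powr c * (1 - x) powr (b - 1) * ((k - c - 1) * (1 - x) + b * x)" for x
  have k: "c + 1 \<le> k"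
    using c b unfolding k_def by (simp add: le_divide_eq)
  show ?thesis
  proof (rule nonneg_if_second_derivative_changes_sign_once
      [where \<Phi> = "beta_moment_gap c b" and \<psi> = \<psi> and D = D and a = 0 and b = 1 and t = t])
    show "continuous_on {0..1} (beta_moment_gap c b)" "beta_moment_gap c b 1 = 0"
      using c b by (simp_all add: continuous_on_beta_moment_gap beta_moment_gap_1)
    show "continuous_on {0..<1} \<psi>"
      unfolding \<psi>_def using c b
      by (intro continuous_intros continuous_on_subset[OF continuous_on_partial_beta_integral]
          continuous_on_powr') auto
    show "\<psi> 0 = 0"
      using c by (simp add: \<psi>_def)
    fix x :: real assume x: "x \<in> {0<..<1}"
    show "(beta_moment_gap c b has_real_derivative \<psi> x) (at x)"
      unfolding \<psi>_def k_def using has_real_derivative_beta_moment_gap[OF _ _ x] c b by simp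
    have "(\<psi> has_real_derivative k * (x powr c * (1 - x) powr b) - ((c + 1) * x powr c * (1 - x) powr b
                                  - x powr (c + 1) * (b * (1 - x) powr (b - 1)))) (at x)"
      unfolding \<psi>_def using c b x
      by (auto intro!: derivative_eq_intros has_real_derivative_partial_beta_integral simp: algebra_simps)
    moreover have "(1 - x) powr b = (1 - x) powr (b - 1) * (1 - x)"
      using x by (simp add: powr_diff)
    ultimately show "(\<psi> has_real_derivative D x) (at x)"
      unfolding D_def using x by (simp add: powr_add algebra_simps)
  next
    \<comment> \<open>\<open>D\<close> has the sign of a linear function that is decreasing because \<open>b \<le> 0 \<le> k - c - 1\<close>\<close>
    fix x y :: real assume xy: "0 < x" "x < y" "y < 1" and "D x < 0"
    then have "(k - c - 1) * (1 - x) + b * x < 0"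
      unfolding D_def by (simp add: mult_less_0_iff)
    moreover have "(y - x) * (b - (k - c - 1)) \<le> 0"
      using xy k b by (intro mult_nonneg_nonpos) auto
    then have "(k - c - 1) * (1 - y) + b * y \<le> (k - c - 1) * (1 - x) + b * x"
      by (simp add: algebra_simps)
    ultimately show "D y \<le> 0"
      unfolding D_def using xy by (simp add: mult_nonneg_nonpos)
  qed (use t in auto)
qed

lemma beta_integral_convex_bound:
  fixes c b :: real and h h' h'' :: "real \<Rightarrow> real"
  assumes c: "c > -1" and b: "-1 < b" "b \<le> 0"
    and h: "continuous_on {0..1} h" "continuous_on {0..1} h'" "continuous_on {0..1} h''"
    and dh: "\<And>x. x \<in> {0<..<1} \<Longrightarrow> (h has_real_derivative h' x) (at x)"
    and dh': "\<And>x. x \<in> {0<..<1} \<Longrightarrow> (h' has_real_derivative h'' x) (at x)"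
    and h1: "0 \<le> h 1" and convex: "\<And>x. x \<in> {0..1} \<Longrightarrow> 0 \<le> h'' x"
  shows "beta_integral (c + 1) b (\<lambda>l. - h' l) \<le> (c + 1) / (b + 1) * beta_integral c b h"
proof -
  define k where "k = (c + 1) / (b + 1)"
  define V where "V = partial_beta_integral c b"
  define \<Phi> where "\<Phi> = beta_moment_gap c b"
  \<comment> \<open>The terms k V h' cancel in E', because \<Phi>' = k V - l^(c+1) (1 - l)^b.\<close>
  define E where "E u = k * V u * h u - \<Phi> u * h' u" for u
  have cont: "continuous_on {0..1} V" "continuous_on {0..1} \<Phi>"
    unfolding V_def \<Phi>_def using c b
    by (simp_all add: continuous_on_partial_beta_integral continuous_on_beta_moment_gap)
  have FTC: "((\<lambda>x. k * (x powr c * (1 - x) powr b * h x) + x powr (c + 1) * (1 - x) powr b * h' x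
               - \<Phi> x * h'' x) has_integral (E 1 - E 0)) {0..1}"
  proof (rule fundamental_theorem_of_calculus_interior)
    show "continuous_on {0..1} E"
      unfolding E_def by (intro continuous_intros cont h)
    fix x :: real assume x: "x \<in> {0<..<1}"
    have "(V has_real_derivative x powr c * (1 - x) powr b) (at x)"
      unfolding V_def using c b x by (simp add: has_real_derivative_partial_beta_integral)
    moreover have "(\<Phi> has_real_derivative k * V x - x powr (c + 1) * (1 - x) powr b) (at x)"
      unfolding \<Phi>_def V_def k_def by (rule has_real_derivative_beta_moment_gap[OF c _ x]) (use b in simp)
    ultimately show "(E has_vector_derivative k * (x powr c * (1 - x) powr b * h x)
            + x powr (c + 1) * (1 - x) powr b * h' x - \<Phi> x * h'' x) (at x)"
      unfolding E_def has_real_derivative_iff_has_vector_derivative[symmetric] using x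
      by (auto intro!: derivative_eq_intros dh dh' simp: algebra_simps)
  qed simp
  have "((\<lambda>x. k * (x powr c * (1 - x) powr b * h x) + x powr (c + 1) * (1 - x) powr b * h' x
           - \<Phi> x * h'' x) has_integral
          (k * beta_integral c b h + beta_integral (c + 1) b h' - integral {0..1} (\<lambda>x. \<Phi> x * h'' x)))
        {0..1}"
  proof -
    have "(\<lambda>x. x powr c * (1 - x) powr b * h x) integrable_on {0..1}"
      "(\<lambda>x. x powr (c + 1) * (1 - x) powr b * h' x) integrable_on {0..1}"
      using c b h by (intro integrable_beta_weighted; simp)+
    moreover have "(\<lambda>x. \<Phi> x * h'' x) integrable_on {0..1}"
      by (intro integrable_continuous_interval continuous_intros cont h)
    ultimately show ?thesis
      unfolding beta_integral_def
      by (intro has_integral_diff has_integral_add has_integral_mult_right integrable_integral)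
  qed
  moreover have "E 1 - E 0 = k * V 1 * h 1"
    using beta_moment_gap_1[OF c] b by (simp add: E_def \<Phi>_def V_def)
  ultimately have parts: "k * beta_integral c b h + beta_integral (c + 1) b h'
                          - integral {0..1} (\<lambda>x. \<Phi> x * h'' x) = k * V 1 * h 1"
    using has_integral_unique[OF _ FTC] by simp
  have "0 \<le> integral {0..1} (\<lambda>x. \<Phi> x * h'' x)"
    using convex beta_moment_gap_nonneg[OF c b] unfolding \<Phi>_def
    by (intro integral_nonneg integrable_continuous_interval continuous_intros cont[unfolded \<Phi>_def] h) auto
  moreover have "0 \<le> k * V 1 * h 1"
    using c b h1 by (simp add: k_def V_def partial_beta_integral_1 Beta_def)
  moreover have "beta_integral (c + 1) b (\<lambda>l. - h' l) = - beta_integral (c + 1) b h'"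
    using beta_integral_cmult[of "c + 1" b "-1" h'] by simp
  ultimately show ?thesis
    unfolding k_def[symmetric] using parts by linarith
qed

section \<open>The logarithmic derivative of the ratio\<close>

lemma beta_integral_one_plus_powr_by_parts:
  fixes c b g w :: real
  assumes c: "c > -1" and b: "b > -1" and w: "0 \<le> w"
  shows "g * w * beta_integral (c + 1) b (\<lambda>l. (1 + w * l) powr (- g - 1))
         = (c + 1) * beta_integral c b (\<lambda>l. (1 + w * l) powr - g)
           - (c + b + 2) * beta_integral (c + 1) b (\<lambda>l. (1 + w * l) powr - g)
           + g * w * beta_integral (c + 2) b (\<lambda>l. (1 + w * l) powr (- g - 1))"
proof -
  define N where "N c' = beta_integral c' b (\<lambda>l. (1 + w * l) powr (- g - 1))" for c'
  have h: "continuous_on {0..1} (\<lambda>l. (1 + w * l) powr d)" for d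
    using w by (intro continuous_on_one_plus_powr)
  have "(c + 1) * beta_integral c b (\<lambda>l. (1 + w * l) powr - g)
        = (c + b + 2) * beta_integral (c + 1) b (\<lambda>l. (1 + w * l) powr - g)
          - beta_integral (c + 1) (b + 1) (\<lambda>l. - g * w * (1 + w * l) powr (- g - 1))"
    using c b h w
    by (intro beta_integral_by_parts) (auto intro!: derivative_eq_intros continuous_intros h simp: add_pos_nonneg)
  moreover have "beta_integral (c + 1) (b + 1) (\<lambda>l. - g * w * (1 + w * l) powr (- g - 1))
                 = - g * w * (N (c + 1) - N (c + 2))"
    unfolding N_def using c b h
    by (simp add: beta_integral_cmult beta_integral_plus1_right beta_integral_diff left_diff_distrib
        beta_integral_plus1_left[of "c + 1", symmetric] continuous_intros add.assoc)
      (simp add: algebra_simps)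
  ultimately show ?thesis
    unfolding N_def by (simp add: algebra_simps)
qed

lemma beta_integral_one_plus_powr_convex_bound:
  fixes c b g w :: real
  assumes c: "c > -1" and b: "-1 < b" "b \<le> 0" and g: "0 \<le> g" and w: "0 \<le> w"
  shows "g * w * beta_integral (c + 2) b (\<lambda>l. (1 + w * l) powr (- g - 1))
         \<le> (c + 2) / (b + 1) * beta_integral (c + 1) b (\<lambda>l. (1 + w * l) powr - g)"
proof -
  have ne: "1 + w * l \<noteq> 0" "1 + l * w \<noteq> 0" if "0 \<le> l" for l
    using w that by (smt (verit) mult_nonneg_nonneg)+
  have h: "continuous_on {0..1} (\<lambda>l. (1 + w * l) powr d)" for d
    using w by (intro continuous_on_one_plus_powr)
  have "beta_integral (c + 1 + 1) b (\<lambda>l. - (- g * w * (1 + w * l) powr (- g - 1)))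
        \<le> (c + 1 + 1) / (b + 1) * beta_integral (c + 1) b (\<lambda>l. (1 + w * l) powr - g)"
    using c b g h w ne
    by (intro beta_integral_convex_bound[where h'' = "\<lambda>l. g * (g + 1) * w\<^sup>2 * (1 + w * l) powr (- g - 2)"])
      (auto intro!: derivative_eq_intros continuous_intros simp: add_pos_nonneg power2_eq_square algebra_simps)
  then show ?thesis
    using beta_integral_cmult[of "c + 2" b "g * w"] by (simp add: add.assoc)
qed

lemma log_derivative_lower_bound:
  fixes b c S T X Y :: real
  assumes c: "c > -1" and b: "-1 < b" "b \<le> 0" and Y: "0 < Y" "Y \<le> X"
    and S: "S = (c + 1) * X - (c + b + 2) * Y + T" and T: "T \<le> (c + 2) / (b + 1) * Y"
  shows "(c + 2) * b / (b + 1) \<le> 1 - T / Y + S / X"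
proof -
  define k where "k = (c + 2) / (b + 1)"
  define r where "r = Y / X"
  have "b * (c + b + 3) \<le> 0"
    using b c by (intro mult_nonpos_nonneg) auto
  then have "c + b + 2 \<le> k"
    unfolding k_def using b by (simp add: field_simps)
  have "(c + 2) * b / (b + 1) = c + 2 - k"
    unfolding k_def using b by (simp add: field_simps)
  also have "\<dots> \<le> c + 2 - k + (k - (c + b + 2)) * r"
    unfolding r_def using \<open>c + b + 2 \<le> k\<close> Y by simp
  also have "\<dots> = c + 2 - k * Y * (1 / Y - 1 / X) - (c + b + 2) * r"
    unfolding r_def using Y by (simp add: right_diff_distrib algebra_simps)
  also have "\<dots> \<le> c + 2 - T * (1 / Y - 1 / X) - (c + b + 2) * r"
    unfolding k_def using T Y by (intro diff_right_mono diff_left_mono mult_right_mono) (auto simp: field_simps)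
  also have "\<dots> = 1 - T / Y + S / X"
    unfolding S r_def using Y by (simp add: field_simps)
  finally show ?thesis .
qed

lemma beta_ratio_log_derivative_bound:
  fixes c b g w :: real
  assumes c: "c > -1" and b: "-1 < b" "b \<le> 0" and g: "g > 0" and w: "w > 0"
  defines "M \<equiv> \<lambda>c' y. beta_integral c' b (\<lambda>l. (1 + y * l) powr - g)"
  shows "\<exists>D. ((\<lambda>y. y * M (c + 1) y / M c y) has_real_derivative D) (at w) \<and>
             (c + 2) * b / (b + 1) \<le> w * D / (w * M (c + 1) w / M c w)"
proof -
  define N where "N c' = beta_integral c' b (\<lambda>l. (1 + w * l) powr (- g - 1))" for c'
  define X where "X = M c w"
  define Y where "Y = M (c + 1) w"
  have pos: "0 < (1 + w * l) powr d" if "0 \<le> l" for l d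
  proof -
    have "0 < 1 + w * l"
      using w that by (intro add_pos_nonneg) auto
    then show ?thesis by simp
  qed
  have h: "continuous_on {0..1} (\<lambda>l. (1 + w * l) powr d)" for d
    using w by (intro continuous_on_one_plus_powr) simp
  have dM: "(M c' has_real_derivative - g * N (c' + 1)) (at w)" if "c' > -1" for c'
    using has_real_derivative_beta_integral_one_plus_powr[of c' b "- g" w] that b g w
    unfolding M_def N_def by simp
  have Y: "0 < Y"
    unfolding Y_def M_def using c b pos h by (intro beta_integral_pos) auto
  have YX: "Y \<le> X"
    unfolding X_def Y_def M_def beta_integral_plus1_left using c b pos h
    by (intro beta_integral_mono continuous_intros) (auto simp: mult_left_le_one_le less_imp_le)
  define D where "D = ((Y + - g * N (c + 2) * w) * X - - g * N (c + 1) * (w * Y)) / X\<^sup>2"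
  have "((\<lambda>y. y * M (c + 1) y / M c y) has_real_derivative D) (at w)"
    using DERIV_quotient[OF DERIV_mult[OF DERIV_ident dM[of "c + 1"]] dM[OF c]] Y YX c
    by (simp add: D_def X_def Y_def power2_eq_square add.assoc)
  moreover have "(c + 2) * b / (b + 1) \<le> w * D / (w * Y / X)"
  proof -
    have "g * w * N (c + 1) = (c + 1) * X - (c + b + 2) * Y + g * w * N (c + 2)"
      unfolding N_def X_def Y_def M_def using beta_integral_one_plus_powr_by_parts[of c b w g] c b w
      by simp
    moreover have "g * w * N (c + 2) \<le> (c + 2) / (b + 1) * Y"
      unfolding N_def Y_def M_def using beta_integral_one_plus_powr_convex_bound[of c b g w] c b g w
      by simp
    ultimately have "(c + 2) * b / (b + 1) \<le> 1 - g * w * N (c + 2) / Y + g * w * N (c + 1) / X"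
      by (rule log_derivative_lower_bound[OF c b Y YX])
    also have "\<dots> = w * D / (w * Y / X)"
      unfolding D_def using w Y YX by (simp add: field_simps power2_eq_square)
    finally show ?thesis .
  qed
  ultimately show ?thesis
    unfolding X_def Y_def by blast
qed

theorem lemma3p6:
  fixes p n :: nat and a b e :: real
  assumes "p \<ge> 3" and "n \<ge> 1"
    and "e > - real p / 2 - real n / 2 - 1"
    and "- real p / 2 - 1 < a" and "a < real n / 2 + e"
    and "-1 < b" and "b < min (real n / 2 + e - a - 1) 0"
  shows "\<forall>w>0. \<exists>D. (phi_fun p n a b e has_real_derivative D) (at w) \<and>
           w * D / phi_fun p n a b e w \<ge> (real p / 2 + a + 2) * b / (b + 1)"
proof (intro allI impI)
  fix w :: real assume w: "w > 0"
  define c where "c = real p / 2 + a"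
  define g where "g = real p / 2 + real n / 2 + e + 2"
  define M where "M = (\<lambda>c' y. beta_integral c' b (\<lambda>l. (1 + y * l) powr - g))"
  have c: "c > -1" and g: "g > 0" and b: "-1 < b" "b \<le> 0"
    using assms by (auto simp: c_def g_def)
  have phi: "phi_fun p n a b e y = y * M (c + 1) y / M c y" if y: "y > 0" for y
  proof -
    have "(LINT l:{0..1}|lborel. l powr c' * (1 - l) powr b * (1 + y * l) powr - g) = M c' y"
      if "c' > -1" for c'
      unfolding M_def using that b y
      by (intro set_lebesgue_integral_eq_beta_integral continuous_on_one_plus_powr) auto
    moreover have "- real p / 2 - real n / 2 - e - 2 = - g"
      by (simp add: g_def)
    ultimately show ?thesis
      using c unfolding phi_fun_def c_def by simp
  qed
  obtain D where D: "((\<lambda>y. y * M (c + 1) y / M c y) has_real_derivative D) (at w)"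
    "(c + 2) * b / (b + 1) \<le> w * D / (w * M (c + 1) w / M c w)"
    using beta_ratio_log_derivative_bound[OF c b g w] unfolding M_def by blast
  show "\<exists>D. (phi_fun p n a b e has_real_derivative D) (at w) \<and>
          w * D / phi_fun p n a b e w \<ge> (real p / 2 + a + 2) * b / (b + 1)"
  proof (intro exI conjI)
    show "(phi_fun p n a b e has_real_derivative D) (at w)"
      using D(1) by (rule has_field_derivative_transform_within_open[where S = "{0<..}"])
        (use w phi in auto)
    show "w * D / phi_fun p n a b e w \<ge> (real p / 2 + a + 2) * b / (b + 1)"
      using D(2) phi[OF w] by (simp add: c_def)
  qed
qed

end
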